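(* Let $\beta>0$ and $\theta>0$, and let $\mathcal{D}=\{(u_1,u_2)\in(0,1)^2:u_1+u_2<1\}$. Define the $2\times2$ matrix $A(u)$ by the requirement that the system $$\partial_tu_1=\operatorname{div}\Big(\nabla(u_1^2)-u_1\nabla\big(u_1^2+\beta\theta u_1u_2^2+\beta u_2^2\big)\Big),\quad \partial_tu_2=\operatorname{div}\Big(\nabla(\beta\theta u_1u_2^2+\beta u_2^2)-u_2\nabla\big(u_1^2+\beta\theta u_1u_2^2+\beta u_2^2\big)\Big)$$ reads $\partial_tu=\operatorname{div}(A(u)\nabla u)$, $u=(u_1,u_2)$. Then, for $\theta>0$ sufficiently large, there exists $(u_1,u_2)\in\mathcal{D}$ with $u_1\in(0,1/3)$, $u_2\in(2/3,1)$ such that at least one eigenvalue of $A(u)$ has a negative real part.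
   Context: This is the tumor-growth model of Jackson and Byrne: the volume-filling multiphase system with $n=2$, unit drag coefficients, $r_{ij}=0$ and intraphase pressures $q_1(u)=q_{11}u_1+q_{12}u_2$, $q_2(u)=q_{21}u_1+q_{22}u_2$ with $q_{11}=1$, $q_{12}=0$, $q_{21}=\beta\theta u_2$, $q_{22}=\beta$; the system is $\partial_tu_i=\operatorname{div}(\nabla(u_iq_i(u))-u_i\sum_j\nabla(u_jq_j(u)))$. *)

theory Defs
  imports Complex_Main "Jordan_Normal_Form.Char_Poly"
begin

text \<open>With P1(u) = u1^2, P2(u) = beta theta u1 u2^2 + beta u2^2 and P = P1 + P2,
  the system reads du_i/dt = div(grad P_i - u_i grad P), i.e.
  A_ij(u) = dP_i/du_j - u_i dP/du_j.  Indices 0,1 correspond to 1,2.\<close>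

definition dP1 :: "real \<Rightarrow> real \<Rightarrow> real \<Rightarrow> real \<Rightarrow> nat \<Rightarrow> real" where
  "dP1 \<beta> \<theta> u1 u2 j = (if j = 0 then 2 * u1 else 0)"

definition dP2 :: "real \<Rightarrow> real \<Rightarrow> real \<Rightarrow> real \<Rightarrow> nat \<Rightarrow> real" where
  "dP2 \<beta> \<theta> u1 u2 j =
     (if j = 0 then \<beta> * \<theta> * u2^2 else 2 * \<beta> * \<theta> * u1 * u2 + 2 * \<beta> * u2)"

definition JB_matrix :: "real \<Rightarrow> real \<Rightarrow> real \<Rightarrow> real \<Rightarrow> real mat" where
  "JB_matrix \<beta> \<theta> u1 u2 = mat 2 2 (\<lambda>(i, j).
     (if i = 0 then dP1 \<beta> \<theta> u1 u2 j else dP2 \<beta> \<theta> u1 u2 j)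
     - (if i = 0 then u1 else u2) * (dP1 \<beta> \<theta> u1 u2 j + dP2 \<beta> \<theta> u1 u2 j))"

end

theory Submission imports Defs begin

text \<open>The \<theta>-dependent part \<beta>\<theta> u1 u2 (2 - 3 u2) of the trace of A(u) is negative
  once u2 > 2/3. At u = (1/6, 3/4) the trace is 5/18 + 3\<beta>/8 - \<beta>\<theta>/32, negative for
  \<theta> > (80/9 + 12\<beta>)/\<beta>; since the two eigenvalues sum to the trace, one of them has
  negative real part.\<close>

lemma det_mat_2x2:
  assumes "(A :: 'a :: comm_ring_1 mat) \<in> carrier_mat 2 2"
  shows "det A = A $$ (0,0) * A $$ (1,1) - A $$ (0,1) * A $$ (1,0)"
  using assms
  by (simp add: laplace_expansion_row[OF assms, of 0] cofactor_def det_single mat_delete_def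
      insert_index_def numeral_2_eq_2 lessThan_Suc)

lemma eigenvalue_mat_2x2_iff:
  assumes A: "(A :: 'a :: field mat) \<in> carrier_mat 2 2"
  shows "eigenvalue A x \<longleftrightarrow> x\<^sup>2 - (A $$ (0,0) + A $$ (1,1)) * x + det A = 0"
proof -
  have "det (char_matrix A x) = (A $$ (0,0) - x) * (A $$ (1,1) - x) - A $$ (0,1) * A $$ (1,0)"
    using A by (simp add: det_mat_2x2 char_matrix_def)
  also have "\<dots> = x\<^sup>2 - (A $$ (0,0) + A $$ (1,1)) * x + det A"
    using A by (simp add: det_mat_2x2 algebra_simps power2_eq_square)
  finally show ?thesis
    using eigenvalue_det[OF A] by simp
qed

lemma mat_2x2_eigenvalue_Re_neg:
  fixes A :: "complex mat"
  assumes A: "A \<in> carrier_mat 2 2" and trace_neg: "Re (A $$ (0,0) + A $$ (1,1)) < 0"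
  shows "\<exists>\<mu>. eigenvalue A \<mu> \<and> Re \<mu> < 0"
proof -
  define t where "t = A $$ (0,0) + A $$ (1,1)"
  define s where "s = csqrt (t\<^sup>2 - 4 * det A)"
  define \<mu> where "\<mu> = (t - s) / 2"
  have "\<mu>\<^sup>2 - t * \<mu> + det A = (s\<^sup>2 - (t\<^sup>2 - 4 * det A)) / 4"
    unfolding \<mu>_def by (simp add: field_simps power2_eq_square)
  also have "\<dots> = 0"
    unfolding s_def by simp
  finally have "eigenvalue A \<mu>"
    using eigenvalue_mat_2x2_iff[OF A] unfolding t_def by simp
  moreover have "0 \<le> Re s"
    using csqrt_principal[of "t\<^sup>2 - 4 * det A"] unfolding s_def by linarith
  then have "Re \<mu> < 0"
    using trace_neg unfolding \<mu>_def t_def by simp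
  ultimately show ?thesis by blast
qed

lemma JB_matrix_carrier: "JB_matrix \<beta> \<theta> u1 u2 \<in> carrier_mat 2 2"
  by (simp add: JB_matrix_def)

lemma JB_matrix_trace:
  "JB_matrix \<beta> \<theta> u1 u2 $$ (0,0) + JB_matrix \<beta> \<theta> u1 u2 $$ (1,1) =
     2 * u1 * (1 - u1) + 2 * \<beta> * u2 * (1 - u2) + \<beta> * \<theta> * u1 * u2 * (2 - 3 * u2)"
  by (simp add: JB_matrix_def dP1_def dP2_def algebra_simps power2_eq_square)

theorem lemma10:
  fixes \<beta> :: real
  assumes "\<beta> > 0"
  shows "\<exists>\<theta>0 > 0. \<forall>\<theta> > \<theta>0. \<exists>u1 u2.
           0 < u1 \<and> u1 < 1/3 \<and> 2/3 < u2 \<and> u2 < 1 \<and> u1 + u2 < 1 \<and>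
           (\<exists>\<mu>. eigenvalue (map_mat complex_of_real (JB_matrix \<beta> \<theta> u1 u2)) \<mu> \<and> Re \<mu> < 0)"
proof (rule exI[of _ "(80/9 + 12 * \<beta>) / \<beta>"], intro conjI allI impI)
  show "0 < (80/9 + 12 * \<beta>) / \<beta>"
    using assms by simp
  fix \<theta> :: real
  assume "(80/9 + 12 * \<beta>) / \<beta> < \<theta>"
  then have "80/9 + 12 * \<beta> < \<beta> * \<theta>"
    using assms by (simp add: field_simps)
  then have "JB_matrix \<beta> \<theta> (1/6) (3/4) $$ (0,0) + JB_matrix \<beta> \<theta> (1/6) (3/4) $$ (1,1) < 0"
    unfolding JB_matrix_trace by simp
  then have "\<exists>\<mu>. eigenvalue (map_mat complex_of_real (JB_matrix \<beta> \<theta> (1/6) (3/4))) \<mu> \<and> Re \<mu> < 0"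
    using JB_matrix_carrier[of \<beta> \<theta> "1/6" "3/4"]
    by (intro mat_2x2_eigenvalue_Re_neg) auto
  then show "\<exists>u1 u2. 0 < u1 \<and> u1 < 1/3 \<and> 2/3 < u2 \<and> u2 < 1 \<and> u1 + u2 < 1 \<and>
      (\<exists>\<mu>. eigenvalue (map_mat complex_of_real (JB_matrix \<beta> \<theta> u1 u2)) \<mu> \<and> Re \<mu> < 0)"
    by (intro exI[of _ "1/6"] exI[of _ "3/4"]) simp
qed

end
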